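(* Fix $a\in(0,1)$. There exists $d_0=d_0(a)$ such that the following holds for every $d\ge d_0$ and every sufficiently large even integer $n$. Let $G=(V,E)$ be a $d$-regular graph on $n$ vertices. Then for every integer $t\in[d^{a/100},d^{1/10}]$ there exists a collection $(A_i,B_i)_{i=1}^t$ of balanced bipartitions of $V$ (i.e. $V=A_i\sqcup B_i$, $|A_i|=|B_i|=n/2$) such that, writing $G_i$ for the spanning subgraph of $G$ consisting of the edges of $G$ with one endpoint in $A_i$ and the other in $B_i$: (R1) for all $1\le i\le t$, $\frac d2-d^{2/3}\le\delta(G_i)\le\Delta(G_i)\le\frac d2+d^{2/3}$; (R2) for every $e\in E(G)$, the number of indices $i\in[t]$ with $e\in E(G_i)$ lies in $[\frac t2-t^{2/3},\frac t2+t^{2/3}]$.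
   Context: $\delta(\cdot)$ and $\Delta(\cdot)$ denote minimum and maximum degree. *)

theory Defs
  imports Complex_Main
begin

definition simple_graph :: "nat set \<Rightarrow> (nat \<Rightarrow> nat \<Rightarrow> bool) \<Rightarrow> bool" where
  "simple_graph V E \<longleftrightarrow> finite V \<and> (\<forall>u v. E u v \<longrightarrow> u \<in> V \<and> v \<in> V)
     \<and> (\<forall>u v. E u v \<longrightarrow> E v u) \<and> (\<forall>v. \<not> E v v)"

definition degree :: "nat set \<Rightarrow> (nat \<Rightarrow> nat \<Rightarrow> bool) \<Rightarrow> nat \<Rightarrow> nat" where
  "degree V E v = card {u \<in> V. E v u}"

definition regular :: "nat set \<Rightarrow> (nat \<Rightarrow> nat \<Rightarrow> bool) \<Rightarrow> nat \<Rightarrow> bool" where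
  "regular V E d \<longleftrightarrow> (\<forall>v \<in> V. degree V E v = d)"

definition cut_edges :: "(nat \<Rightarrow> nat \<Rightarrow> bool) \<Rightarrow> nat set \<Rightarrow> nat set \<Rightarrow> nat \<Rightarrow> nat \<Rightarrow> bool" where
  "cut_edges E A B u v \<longleftrightarrow> E u v \<and> ((u \<in> A \<and> v \<in> B) \<or> (u \<in> B \<and> v \<in> A))"

definition balanced_bipartition :: "nat set \<Rightarrow> nat set \<Rightarrow> nat set \<Rightarrow> bool" where
  "balanced_bipartition V A B \<longleftrightarrow> A \<union> B = V \<and> A \<inter> B = {}
     \<and> 2 * card A = card V \<and> 2 * card B = card V"

definition min_degree :: "nat set \<Rightarrow> (nat \<Rightarrow> nat \<Rightarrow> bool) \<Rightarrow> nat" where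
  "min_degree V E = Min (degree V E ` V)"

definition max_degree :: "nat set \<Rightarrow> (nat \<Rightarrow> nat \<Rightarrow> bool) \<Rightarrow> nat" where
  "max_degree V E = Max (degree V E ` V)"

end

theory Submission
  imports Defs "HOL-Library.FuncSet" "HOL-Probability.Hoeffding" "HOL-Real_Asymp.Real_Asymp"
begin

text \<open>Since \<open>n \<ge> 2d + 3\<close>, the vertices can be split into pairs \<open>{v, \<pi> v}\<close> none of which is an edge
  (re-pair an offending pair with a suitable other pair until none is left). In every round \<open>i\<close>
  a fair coin per pair decides which of its two vertices goes to \<open>A i\<close>, so every \<open>A i\<close> is
  balanced. The degree of \<open>v\<close> in \<open>G i\<close> is \<open>d / 2\<close> plus a sum of independent \<open>\<plusminus>1/2\<close> terms (a
  neighbour whose partner is also a neighbour contributes exactly \<open>1/2\<close> together with it), and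
  an edge is cut in a binomially distributed number of rounds. By Chernoff's bound each of these
  quantities deviates by more than \<open>d powr (2/3)\<close> resp. \<open>t powr (2/3)\<close> with probability at most
  \<open>2 exp (-2 d powr (a/300))\<close>, while each such event shares coins with only \<open>O(d\<^sup>2)\<close> others.
  The symmetric Lovasz local lemma, proved here by counting assignments of independent coins,
  therefore produces an assignment avoiding all of them.\<close>

section \<open>Independent fair coins\<close>

definition bool_assignments :: "'v set \<Rightarrow> ('v \<Rightarrow> bool) set" where
  "bool_assignments I = PiE I (\<lambda>_. UNIV)"

definition depends_only :: "'v set \<Rightarrow> 'v set \<Rightarrow> ('v \<Rightarrow> bool) set \<Rightarrow> bool" where
  "depends_only I K A \<longleftrightarrow>
     (\<forall>f\<in>bool_assignments I. \<forall>g\<in>bool_assignments I. (\<forall>k\<in>K. f k = g k) \<longrightarrow> (f \<in> A \<longleftrightarrow> g \<in> A))"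

definition avoiding :: "'v set \<Rightarrow> ('x \<Rightarrow> ('v \<Rightarrow> bool) set) \<Rightarrow> 'x set \<Rightarrow> ('v \<Rightarrow> bool) set" where
  "avoiding I A S = {f \<in> bool_assignments I. \<forall>y\<in>S. f \<notin> A y}"

lemma finite_bool_assignments: "finite I \<Longrightarrow> finite (bool_assignments I)"
  unfolding bool_assignments_def by (simp add: finite_PiE)

lemma card_bool_assignments_pos: "finite I \<Longrightarrow> 0 < card (bool_assignments I)"
  using finite_bool_assignments[of I]
  by (auto simp: card_gt_0_iff bool_assignments_def PiE_eq_empty_iff)

lemma override_on_bool_assignments:
  "f \<in> bool_assignments I \<Longrightarrow> g \<in> bool_assignments I \<Longrightarrow> override_on f g K \<in> bool_assignments I"
  unfolding bool_assignments_def override_on_def PiE_def extensional_def by auto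

text \<open>Events depending on disjoint sets of coordinates are independent: swapping the coordinates
  in \<open>K\<close> is a bijection between \<open>A \<times> B\<close> and \<open>(A \<inter> B) \<times> bool_assignments I\<close>.\<close>
lemma card_Int_independent:
  assumes A: "depends_only I K A" and B: "depends_only I L B" and "K \<inter> L = {}"
    and "A \<subseteq> bool_assignments I" "B \<subseteq> bool_assignments I"
  shows "card (A \<inter> B) * card (bool_assignments I) = card A * card B"
proof -
  define swap :: "('a \<Rightarrow> bool) \<times> ('a \<Rightarrow> bool) \<Rightarrow> _"
    where "swap = (\<lambda>(f, g). (override_on g f K, override_on f g K))"
  have swap_swap: "swap (swap p) = p" for p
    by (cases p) (auto simp: swap_def override_on_def)
  have in_A: "override_on g f K \<in> A \<longleftrightarrow> f \<in> A"
    if "f \<in> bool_assignments I" "g \<in> bool_assignments I" for f g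
  proof -
    have "\<forall>k\<in>K. override_on g f K k = f k" by simp
    thus ?thesis using A that override_on_bool_assignments[OF that(2,1)]
      unfolding depends_only_def by blast
  qed
  have in_B: "override_on f g K \<in> B \<longleftrightarrow> f \<in> B"
    if "f \<in> bool_assignments I" "g \<in> bool_assignments I" for f g
  proof -
    have "\<forall>k\<in>L. override_on f g K k = f k" using \<open>K \<inter> L = {}\<close> by (auto simp: override_on_def)
    thus ?thesis using B that override_on_bool_assignments[OF that]
      unfolding depends_only_def by blast
  qed
  have "swap ` (A \<times> B) \<subseteq> (A \<inter> B) \<times> bool_assignments I"
  proof (clarsimp simp: swap_def)
    fix f g assume "f \<in> A" "g \<in> B"
    hence "f \<in> bool_assignments I" "g \<in> bool_assignments I" using assms(4,5) by auto
    thus "override_on g f K \<in> A \<and> override_on g f K \<in> B \<and>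
        override_on f g K \<in> bool_assignments I"
      using in_A in_B \<open>f \<in> A\<close> \<open>g \<in> B\<close> override_on_bool_assignments by blast
  qed
  moreover have "swap ` ((A \<inter> B) \<times> bool_assignments I) \<subseteq> A \<times> B"
  proof (clarsimp simp: swap_def)
    fix f g assume "f \<in> A" "f \<in> B" "g \<in> bool_assignments I"
    thus "override_on g f K \<in> A \<and> override_on f g K \<in> B"
      using in_A in_B assms(4) by blast
  qed
  ultimately have "bij_betw swap (A \<times> B) ((A \<inter> B) \<times> bool_assignments I)"
    by (intro bij_betw_byWitness[where f'=swap]) (auto simp: swap_swap)
  hence "card (A \<times> B) = card ((A \<inter> B) \<times> bool_assignments I)"
    by (rule bij_betw_same_card)
  thus ?thesis by (simp add: card_cartesian_product mult.commute)
qed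

lemma depends_only_avoiding:
  assumes "\<And>y. y \<in> S \<Longrightarrow> depends_only I (K y) (A y)"
  shows "depends_only I (\<Union>y\<in>S. K y) (avoiding I A S)"
  unfolding depends_only_def
proof (intro ballI impI)
  fix f g assume fg: "f \<in> bool_assignments I" "g \<in> bool_assignments I"
    and agree: "\<forall>k\<in>(\<Union>y\<in>S. K y). f k = g k"
  have "f \<in> A y \<longleftrightarrow> g \<in> A y" if "y \<in> S" for y
    using assms[OF that] fg agree that unfolding depends_only_def by blast
  thus "f \<in> avoiding I A S \<longleftrightarrow> g \<in> avoiding I A S"
    using fg by (auto simp: avoiding_def)
qed

section \<open>The symmetric local lemma\<close>

text \<open>Two events are dependent when their supports share a coordinate; \<open>D\<close> bounds the number of
  events dependent on a given one, itself included.\<close>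
locale local_lemma =
  fixes I :: "'v set" and X :: "'x set" and bad :: "'x \<Rightarrow> ('v \<Rightarrow> bool) set"
    and support :: "'x \<Rightarrow> 'v set" and D :: nat and p :: real
  assumes finite_coordinates: "finite I" and finite_events: "finite X"
    and depends_on_support: "\<And>x. x \<in> X \<Longrightarrow> depends_only I (support x) (bad x)"
    and card_dependent: "\<And>x. x \<in> X \<Longrightarrow> card {y \<in> X. support x \<inter> support y \<noteq> {}} \<le> D"
    and card_bad: "\<And>x. x \<in> X \<Longrightarrow> real (card (bad x \<inter> bool_assignments I)) \<le> p * real (card (bool_assignments I))"
    and p_small: "p * (real D + 2)^2 \<le> 1"
begin

abbreviation \<Omega> where "\<Omega> \<equiv> bool_assignments I"
abbreviation good where "good \<equiv> avoiding I bad"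

definition q :: real where "q = 1 / (real D + 2)"

lemma q_bounds: "0 < q" "q < 1"
  by (auto simp: q_def)

lemma p_le_q: "p \<le> q * (1 - q)^D"
proof -
  have "p \<le> 1 / (real D + 2)^2"
    using p_small by (simp add: field_simps)
  also have "\<dots> \<le> 2 / (real D + 2)^2"
    by (simp add: divide_right_mono)
  also have "\<dots> = q * (1 - real D * q)"
    by (simp add: q_def field_simps power2_eq_square)
  also have "\<dots> \<le> q * (1 - q)^D"
    using Bernoulli_inequality[of "-q" D] q_bounds by (intro mult_left_mono) auto
  finally show ?thesis .
qed

lemma finite_good: "finite (good S)"
  using finite_bool_assignments[OF finite_coordinates] by (simp add: avoiding_def)

text \<open>The invariant of the local lemma: conditioned on avoiding the events in \<open>S\<close>,
  every further event has relative probability at most \<open>q\<close>.\<close>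
definition conditionally_rare :: "'x set \<Rightarrow> bool" where
  "conditionally_rare S \<longleftrightarrow>
     (\<forall>x\<in>X - S. real (card (bad x \<inter> good S)) \<le> q * real (card (good S)))"

lemma card_good_insert:
  assumes "y \<in> X - S" "conditionally_rare S"
  shows "(1 - q) * real (card (good S)) \<le> real (card (good (insert y S)))"
proof -
  have "good (insert y S) = good S - bad y \<inter> good S"
    by (auto simp: avoiding_def)
  hence "real (card (good (insert y S))) = real (card (good S)) - real (card (bad y \<inter> good S))"
    using finite_good by (simp add: card_Diff_subset of_nat_diff card_mono)
  moreover have "real (card (bad y \<inter> good S)) \<le> q * real (card (good S))"
    using assms unfolding conditionally_rare_def by blast
  ultimately show ?thesis by (simp add: algebra_simps)
qed

lemma card_good_Un:
  assumes "finite U" "U \<subseteq> X" "W \<subseteq> X" "W \<inter> U = {}"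
    and rare: "\<And>S. S \<subseteq> X \<Longrightarrow> card S < card (W \<union> U) \<Longrightarrow> conditionally_rare S"
  shows "(1 - q)^card U * real (card (good W)) \<le> real (card (good (W \<union> U)))"
  using assms
proof (induction U rule: finite_induct)
  case empty
  thus ?case by simp
next
  case (insert y U)
  have finW: "finite W" using \<open>W \<subseteq> X\<close> finite_events finite_subset by blast
  have "card (W \<union> U) < card (W \<union> insert y U)"
    using insert finW by (simp add: card_insert_if)
  hence IH: "(1 - q)^card U * real (card (good W)) \<le> real (card (good (W \<union> U)))"
    using insert by (intro insert.IH) auto
  have "(1 - q)^card (insert y U) * real (card (good W))
      = (1 - q) * ((1 - q)^card U * real (card (good W)))"
    using insert by simp
  also have "\<dots> \<le> (1 - q) * real (card (good (W \<union> U)))"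
    using IH q_bounds by (intro mult_left_mono) auto
  also have "\<dots> \<le> real (card (good (insert y (W \<union> U))))"
    using insert \<open>card (W \<union> U) < _\<close> by (intro card_good_insert) auto
  finally show ?case by simp
qed

lemma card_bad_Int_good_independent:
  assumes "x \<in> X" "S \<subseteq> X" "\<And>y. y \<in> S \<Longrightarrow> support x \<inter> support y = {}"
  shows "real (card (bad x \<inter> good S)) \<le> p * real (card (good S))"
proof -
  have "depends_only I (support x) (bad x \<inter> \<Omega>)"
    using depends_on_support[OF \<open>x \<in> X\<close>] unfolding depends_only_def by blast
  moreover have "depends_only I (\<Union>y\<in>S. support y) (good S)"
    using depends_on_support \<open>S \<subseteq> X\<close> by (intro depends_only_avoiding) auto
  moreover have "support x \<inter> (\<Union>y\<in>S. support y) = {}"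
    using assms(3) by auto
  ultimately have "card (bad x \<inter> \<Omega> \<inter> good S) * card \<Omega> = card (bad x \<inter> \<Omega>) * card (good S)"
    by (intro card_Int_independent) (auto simp: avoiding_def)
  moreover have "bad x \<inter> \<Omega> \<inter> good S = bad x \<inter> good S"
    by (auto simp: avoiding_def)
  ultimately have "real (card (bad x \<inter> good S)) * real (card \<Omega>)
      = real (card (bad x \<inter> \<Omega>)) * real (card (good S))"
    by (metis of_nat_mult)
  also have "\<dots> \<le> (p * real (card \<Omega>)) * real (card (good S))"
    using card_bad[OF \<open>x \<in> X\<close>] by (intro mult_right_mono) auto
  finally have "real (card (bad x \<inter> good S)) * real (card \<Omega>)
      \<le> (p * real (card (good S))) * real (card \<Omega>)"
    by (simp add: ac_simps)
  thus ?thesis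
    using card_bool_assignments_pos[OF finite_coordinates] by simp
qed

text \<open>Split \<open>S\<close> into the events sharing coordinates with \<open>x\<close> and the rest. The rest is
  independent of \<open>x\<close>, and avoiding the (at most \<open>D\<close>) others shrinks \<open>good\<close> by at most
  a factor \<open>(1 - q)^D\<close>.\<close>
lemma conditionally_rare_step:
  assumes "S \<subseteq> X" and rare: "\<And>S'. S' \<subseteq> X \<Longrightarrow> card S' < card S \<Longrightarrow> conditionally_rare S'"
  shows "conditionally_rare S"
  unfolding conditionally_rare_def
proof
  fix x assume x: "x \<in> X - S"
  define S1 where "S1 = {y \<in> S. support x \<inter> support y \<noteq> {}}"
  define S2 where "S2 = S - S1"
  have finS: "finite S" using \<open>S \<subseteq> X\<close> finite_events finite_subset by blast
  have split: "S2 \<union> S1 = S" "S2 \<inter> S1 = {}" by (auto simp: S1_def S2_def)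
  have "(1 - q)^card S1 * real (card (good S2)) \<le> real (card (good (S2 \<union> S1)))"
    using finS \<open>S \<subseteq> X\<close> split(2)
    by (intro card_good_Un rare[folded split(1)]) (auto simp: S1_def S2_def)
  hence "(1 - q)^card S1 * real (card (good S2)) \<le> real (card (good S))"
    by (simp only: split(1))
  moreover have "(1 - q)^D \<le> (1 - q)^card S1"
  proof -
    have "card S1 \<le> card {y \<in> X. support x \<inter> support y \<noteq> {}}"
      using \<open>S \<subseteq> X\<close> finite_events by (intro card_mono) (auto simp: S1_def)
    thus ?thesis using card_dependent[of x] x q_bounds by (intro power_decreasing) auto
  qed
  ultimately have S2_large: "(1 - q)^D * real (card (good S2)) \<le> real (card (good S))"
    by (smt (verit) mult_right_mono of_nat_0_le_iff)
  have "card (bad x \<inter> good S) \<le> card (bad x \<inter> good S2)"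
    using finite_good by (intro card_mono) (auto simp: avoiding_def S2_def)
  hence "real (card (bad x \<inter> good S)) \<le> real (card (bad x \<inter> good S2))"
    by simp
  also have "\<dots> \<le> p * real (card (good S2))"
    using x \<open>S \<subseteq> X\<close> by (intro card_bad_Int_good_independent) (auto simp: S1_def S2_def)
  also have "\<dots> \<le> q * (1 - q)^D * real (card (good S2))"
    using p_le_q by (intro mult_right_mono) auto
  also have "\<dots> \<le> q * real (card (good S))"
    using S2_large q_bounds by (simp add: mult.assoc mult_left_mono)
  finally show "real (card (bad x \<inter> good S)) \<le> q * real (card (good S))" .
qed

lemma conditionally_rare: "S \<subseteq> X \<Longrightarrow> conditionally_rare S"
proof (induction "card S" arbitrary: S rule: less_induct)
  case less
  show ?case
    by (rule conditionally_rare_step[OF less.prems]) (rule less.hyps)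
qed

theorem exists_avoiding_all: "\<exists>f\<in>\<Omega>. \<forall>x\<in>X. f \<notin> bad x"
proof -
  have "(1 - q)^card X * real (card (good {})) \<le> real (card (good ({} \<union> X)))"
    using conditionally_rare finite_events by (intro card_good_Un) auto
  moreover have "good {} = \<Omega>" by (simp add: avoiding_def)
  moreover have "0 < (1 - q)^card X * real (card \<Omega>)"
    using card_bool_assignments_pos[OF finite_coordinates] q_bounds by simp
  ultimately have "0 < card (good X)" by simp
  then obtain f where "f \<in> good X" by (metis card.empty less_irrefl all_not_in_conv)
  thus ?thesis by (auto simp: avoiding_def)
qed

end

section \<open>Chernoff's bound for fair coins\<close>

text \<open>If \<open>c f\<close> never looks at the coordinates \<open>\<phi> ` M\<close>, then \<open>f (\<phi> m) = c f m\<close> for the various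
  \<open>m \<in> M\<close> are independent fair coins: flipping coordinate \<open>\<phi> m\<close> is an involution of the
  assignments exchanging the two outcomes of coin \<open>m\<close> and leaving the others alone.\<close>
lemma sum_prod_agreements:
  fixes \<phi> :: "'m \<Rightarrow> 'v" and c :: "('v \<Rightarrow> bool) \<Rightarrow> 'm \<Rightarrow> bool" and w :: "bool \<Rightarrow> real"
  assumes "finite M" "inj_on \<phi> M" "\<phi> ` M \<subseteq> I"
    and "\<And>f k b. k \<in> \<phi> ` M \<Longrightarrow> c (f(k := b)) = c f"
  shows "(\<Sum>f\<in>bool_assignments I. \<Prod>m\<in>M. w (f (\<phi> m) = c f m))
    = real (card (bool_assignments I)) * ((w True + w False) / 2)^card M"
  using assms
proof (induction M rule: finite_induct)
  case empty
  thus ?case by simp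
next
  case (insert m M)
  define k where "k = \<phi> m"
  have "k \<in> I" "k \<notin> \<phi> ` M" using insert by (auto simp: k_def)
  define F where "F f = (\<Prod>m\<in>M. w (f (\<phi> m) = c f m))" for f
  define flip where "flip f = f(k := \<not> f k)" for f :: "'v \<Rightarrow> bool"
  have flip_bool_assignments: "f \<in> bool_assignments I \<Longrightarrow> flip f \<in> bool_assignments I" for f
    using \<open>k \<in> I\<close> unfolding bool_assignments_def flip_def PiE_def extensional_def by auto
  have flip_flip: "flip (flip f) = f" for f
    by (auto simp: flip_def)
  have c_flip: "c (flip f) = c f" for f
    unfolding flip_def by (rule insert.prems(3)) (auto simp: k_def)
  have F_flip: "F (flip f) = F f" for f
    unfolding F_def using c_flip \<open>k \<notin> \<phi> ` M\<close> by (intro prod.cong) (auto simp: flip_def)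
  have IH: "(\<Sum>f\<in>bool_assignments I. F f)
      = real (card (bool_assignments I)) * ((w True + w False) / 2)^card M"
    unfolding F_def by (rule insert.IH) (use insert.prems in auto)
  have split: "(\<Prod>x\<in>insert m M. w (f (\<phi> x) = c f x)) = w (f k = c f m) * F f" for f
    using insert by (simp add: F_def k_def)
  have flipped: "(\<Sum>f\<in>bool_assignments I. w (f k = c f m) * F f)
      = (\<Sum>f\<in>bool_assignments I. w (\<not> f k = c f m) * F f)"
    by (rule sum.reindex_bij_witness[where i=flip and j=flip])
       (auto simp: flip_bool_assignments flip_flip F_flip c_flip, simp_all add: flip_def)
  have w_sum: "w (b = x) + w (\<not> b = x) = w True + w False" for b x
    by (cases "b = x") auto
  have "2 * (\<Sum>f\<in>bool_assignments I. w (f k = c f m) * F f)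
      = (\<Sum>f\<in>bool_assignments I. (w (f k = c f m) + w (\<not> f k = c f m)) * F f)"
    using flipped by (simp add: sum.distrib distrib_right)
  also have "\<dots> = (w True + w False) * (\<Sum>f\<in>bool_assignments I. F f)"
    by (simp only: w_sum sum_distrib_left)
  finally have "(\<Sum>f\<in>bool_assignments I. w (f k = c f m) * F f)
      = ((w True + w False) / 2) * (\<Sum>f\<in>bool_assignments I. F f)"
    by simp
  thus ?case
    using insert IH by (simp add: split)
qed

lemma exp_add_one_half_le:
  fixes h :: real
  assumes "h \<ge> 0"
  shows "(exp h + 1) / 2 \<le> exp (h / 2 + h^2 / 8)"
proof -
  have "-h * (1/2) + ln (1 + (1/2) * (exp h - 1)) \<le> h^2 / 8"
    by (rule Hoeffdings_lemma_aux) (use assms in auto)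
  moreover have "ln ((exp h + 1) / 2) = ln (1 + (1/2) * (exp h - 1))"
    by (simp add: field_simps)
  ultimately have "ln ((exp h + 1) / 2) \<le> h / 2 + h^2 / 8"
    by linarith
  moreover have "(exp h + 1) / 2 > 0"
    by (simp add: add_pos_pos)
  ultimately show ?thesis
    by (metis exp_le_cancel_iff exp_ln)
qed

text \<open>The exponential moment method with the optimal parameter \<open>h = 4 r / card M\<close>.\<close>
lemma card_agreements_upper_tail:
  fixes \<phi> :: "'m \<Rightarrow> 'v" and c :: "('v \<Rightarrow> bool) \<Rightarrow> 'm \<Rightarrow> bool"
  assumes "finite I" "finite M" "inj_on \<phi> M" "\<phi> ` M \<subseteq> I"
    and "\<And>f k b. k \<in> \<phi> ` M \<Longrightarrow> c (f(k := b)) = c f"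
    and "r > 0" "M \<noteq> {}"
  shows "real (card {f \<in> bool_assignments I.
            real (card M) / 2 + r \<le> real (card {m \<in> M. f (\<phi> m) = c f m})})
     \<le> real (card (bool_assignments I)) * exp (- 2 * r^2 / real (card M))"
proof -
  define \<mu> where "\<mu> = real (card M)"
  have "\<mu> > 0" using assms by (simp add: \<mu>_def card_gt_0_iff)
  define h where "h = 4 * r / \<mu>"
  have "h > 0" using \<open>\<mu> > 0\<close> \<open>r > 0\<close> by (simp add: h_def)
  define agree where "agree f = card {m \<in> M. f (\<phi> m) = c f m}" for f
  define T where "T = {f \<in> bool_assignments I. \<mu> / 2 + r \<le> real (agree f)}"
  have exp_agree: "exp (h * real (agree f)) = (\<Prod>m\<in>M. (\<lambda>b. if b then exp h else 1) (f (\<phi> m) = c f m))"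
    for f using \<open>finite M\<close>
    by (simp add: prod.If_cases Int_def agree_def exp_of_nat_mult[symmetric] mult.commute)
  have "real (card T) * exp (h * (\<mu> / 2 + r)) \<le> (\<Sum>f\<in>T. exp (h * real (agree f)))"
    using sum_mono[of T "\<lambda>_. exp (h * (\<mu> / 2 + r))" "\<lambda>f. exp (h * real (agree f))"] \<open>h > 0\<close>
    by (simp add: T_def)
  also have "\<dots> \<le> (\<Sum>f\<in>bool_assignments I. exp (h * real (agree f)))"
    using finite_bool_assignments[OF \<open>finite I\<close>] by (intro sum_mono2) (auto simp: T_def)
  also have "\<dots> = real (card (bool_assignments I)) * ((exp h + 1) / 2)^card M"
    unfolding exp_agree using assms by (subst sum_prod_agreements) auto
  also have "\<dots> \<le> real (card (bool_assignments I)) * exp (h / 2 + h^2 / 8) ^ card M"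
    using \<open>h > 0\<close> by (intro mult_left_mono power_mono exp_add_one_half_le) auto
  also have "\<dots> = real (card (bool_assignments I)) * exp (\<mu> * (h / 2 + h^2 / 8))"
    by (simp add: \<mu>_def exp_of_nat_mult[symmetric])
  finally have "real (card T) \<le> real (card (bool_assignments I))
      * exp (\<mu> * (h / 2 + h^2 / 8)) / exp (h * (\<mu> / 2 + r))"
    by (simp add: field_simps)
  also have "\<dots> = real (card (bool_assignments I)) * exp (\<mu> * (h / 2 + h^2 / 8) - h * (\<mu> / 2 + r))"
    by (simp add: exp_diff)
  also have "\<mu> * (h / 2 + h^2 / 8) - h * (\<mu> / 2 + r) = - 2 * r^2 / \<mu>"
    using \<open>\<mu> > 0\<close> by (simp add: h_def field_simps power2_eq_square)
  finally show ?thesis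
    by (simp add: T_def agree_def \<mu>_def)
qed

text \<open>The lower tail is the upper tail of the disagreements, i.e. of the agreements with \<open>\<not> c\<close>.\<close>
lemma card_agreements_deviation:
  fixes \<phi> :: "'m \<Rightarrow> 'v" and c :: "('v \<Rightarrow> bool) \<Rightarrow> 'm \<Rightarrow> bool"
  assumes "finite I" "finite M" "inj_on \<phi> M" "\<phi> ` M \<subseteq> I"
    and "\<And>f k b. k \<in> \<phi> ` M \<Longrightarrow> c (f(k := b)) = c f"
    and "r > 0" "M \<noteq> {}"
  shows "real (card {f \<in> bool_assignments I.
            r \<le> \<bar>real (card {m \<in> M. f (\<phi> m) = c f m}) - real (card M) / 2\<bar>})
     \<le> 2 * real (card (bool_assignments I)) * exp (- 2 * r^2 / real (card M))"
proof -
  define tail where "tail c' = {f \<in> bool_assignments I.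
      real (card M) / 2 + r \<le> real (card {m \<in> M. f (\<phi> m) = c' f m})}" for c'
  have complement: "card {m \<in> M. f (\<phi> m) = (\<not> c f m)} = card M - card {m \<in> M. f (\<phi> m) = c f m}"
    for f using \<open>finite M\<close> by (subst card_Diff_subset[symmetric]) (auto intro: arg_cong[where f=card])
  have "card {m \<in> M. f (\<phi> m) = c f m} \<le> card M" for f
    using \<open>finite M\<close> by (intro card_mono) auto
  hence "{f \<in> bool_assignments I. r \<le> \<bar>real (card {m \<in> M. f (\<phi> m) = c f m}) - real (card M) / 2\<bar>}
      \<subseteq> tail c \<union> tail (\<lambda>f m. \<not> c f m)"
    using complement by (auto simp: tail_def abs_if of_nat_diff split: if_splits)
  hence "card {f \<in> bool_assignments I. r \<le> \<bar>real (card {m \<in> M. f (\<phi> m) = c f m}) - real (card M) / 2\<bar>}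
      \<le> card (tail c \<union> tail (\<lambda>f m. \<not> c f m))"
    using finite_bool_assignments[OF \<open>finite I\<close>] by (intro card_mono) (auto simp: tail_def)
  also have "\<dots> \<le> card (tail c) + card (tail (\<lambda>f m. \<not> c f m))"
    by (rule card_Un_le)
  finally have "real (card {f \<in> bool_assignments I.
      r \<le> \<bar>real (card {m \<in> M. f (\<phi> m) = c f m}) - real (card M) / 2\<bar>})
      \<le> real (card (tail c)) + real (card (tail (\<lambda>f m. \<not> c f m)))"
    by linarith
  moreover have "real (card (tail c)) \<le> real (card (bool_assignments I)) * exp (- 2 * r^2 / real (card M))"
    unfolding tail_def using assms by (intro card_agreements_upper_tail) auto
  moreover have "real (card (tail (\<lambda>f m. \<not> c f m)))
      \<le> real (card (bool_assignments I)) * exp (- 2 * r^2 / real (card M))"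
    unfolding tail_def using assms by (intro card_agreements_upper_tail) auto
  ultimately show ?thesis by linarith
qed

section \<open>Pairings avoiding the edges of a graph\<close>

definition pairing :: "'a set \<Rightarrow> ('a \<Rightarrow> 'a) \<Rightarrow> bool" where
  "pairing V \<pi> \<longleftrightarrow> (\<forall>v\<in>V. \<pi> v \<in> V \<and> \<pi> v \<noteq> v \<and> \<pi> (\<pi> v) = v)"

lemma pairing_exists: "finite V \<Longrightarrow> even (card V) \<Longrightarrow> \<exists>\<pi>. pairing V \<pi>"
proof (induction "card V" arbitrary: V rule: less_induct)
  case less
  show ?case
  proof (cases "V = {}")
    case True
    thus ?thesis by (auto simp: pairing_def)
  next
    case False
    then obtain a where a: "a \<in> V" by auto
    have "card V \<noteq> 1" "card V > 0"
      using less.prems False by (auto simp: card_gt_0_iff)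
    hence "card (V - {a}) > 0"
      using a less.prems(1) by simp
    then obtain b where b: "b \<in> V" "b \<noteq> a"
      by (metis card_gt_0_iff ex_in_conv DiffE singletonI)
    have "card (V - {a, b}) = card V - 2"
      using a b less.prems(1) by (simp add: card_Diff_subset)
    moreover have "card V \<ge> 2"
      using \<open>card V \<noteq> 1\<close> \<open>card V > 0\<close> by linarith
    ultimately have "card (V - {a, b}) < card V" "even (card (V - {a, b}))"
      using less.prems(2) by auto
    then obtain \<pi> where \<pi>: "pairing (V - {a, b}) \<pi>"
      using less.hyps[of "V - {a, b}"] less.prems(1) by blast
    have "pairing V (\<pi>(a := b, b := a))"
      using \<pi> a b unfolding pairing_def by auto
    thus ?thesis by blast
  qed
qed

lemma pairing_two_pairs_distinct:
  assumes \<pi>: "pairing V \<pi>" and "v \<in> V" "w \<in> V" "w \<noteq> v" "w \<noteq> \<pi> v"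
  shows "\<pi> v \<noteq> v" "\<pi> w \<noteq> w" "\<pi> w \<noteq> v" "\<pi> w \<noteq> \<pi> v"
  using assms unfolding pairing_def by metis+

lemma pairing_swap:
  assumes \<pi>: "pairing V \<pi>" and "v \<in> V" "w \<in> V" "w \<noteq> v" "w \<noteq> \<pi> v"
  shows "pairing V (\<pi>(v := w, w := v, \<pi> v := \<pi> w, \<pi> w := \<pi> v))" (is "pairing V ?\<sigma>")
proof -
  have \<pi>_simps: "\<pi> x \<in> V" "\<pi> x \<noteq> x" "\<pi> (\<pi> x) = x" if "x \<in> V" for x
    using \<pi> that by (auto simp: pairing_def)
  note distinct = pairing_two_pairs_distinct[OF assms] assms(4,5)
  have "?\<sigma> x \<in> V \<and> ?\<sigma> x \<noteq> x \<and> ?\<sigma> (?\<sigma> x) = x" if "x \<in> V" for x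
  proof (cases "x \<in> {v, w, \<pi> v, \<pi> w}")
    case True
    hence "x = v \<or> x = w \<or> x = \<pi> v \<or> x = \<pi> w" by simp
    thus ?thesis
      using distinct distinct[symmetric] assms(2,3) \<pi>_simps(1)[OF assms(2)] \<pi>_simps(1)[OF assms(3)]
      by (elim disjE) simp_all
  next
    case False
    moreover have "\<pi> x \<notin> {v, w, \<pi> v, \<pi> w}"
      using False \<pi>_simps(3)[OF that] \<pi>_simps(3)[OF assms(2)] \<pi>_simps(3)[OF assms(3)] by auto
    ultimately show ?thesis
      using \<pi>_simps[OF that] by simp
  qed
  thus ?thesis
    unfolding pairing_def by blast
qed

lemma exists_swap_partner:
  assumes "simple_graph V E" and deg: "\<And>x. x \<in> V \<Longrightarrow> Defs.degree V E x \<le> d"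
    and "2 * d + 3 \<le> card V" "v \<in> V" "u \<in> V"
  shows "\<exists>w \<in> V - {v, u}. \<not> E v w \<and> w \<notin> \<pi> ` {x \<in> V. E u x}"
proof -
  have "finite V" using assms(1) by (simp add: simple_graph_def)
  define B where "B = {v, u} \<union> {x \<in> V. E v x} \<union> \<pi> ` {x \<in> V. E u x}"
  have "card B \<le> card {v, u} + card {x \<in> V. E v x} + card (\<pi> ` {x \<in> V. E u x})"
    unfolding B_def by (meson card_Un_le add_mono le_trans order_refl)
  also have "\<dots> \<le> 2 + d + d"
    using deg[of v] deg[of u] assms(4,5) card_image_le[of "{x \<in> V. E u x}" \<pi>] \<open>finite V\<close>
    by (simp add: Defs.degree_def card_insert_le_m1 add_mono card_insert_if)
  finally have "card B < card V" using assms(3) by linarith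
  moreover have "finite B"
    using \<open>finite V\<close> by (simp add: B_def)
  ultimately have "\<not> V \<subseteq> B"
    using card_mono[of B V] by linarith
  thus ?thesis by (auto simp: B_def)
qed

lemma pairing_fewer_edge_pairs:
  assumes "simple_graph V E" "\<And>x. x \<in> V \<Longrightarrow> Defs.degree V E x \<le> d" "2 * d + 3 \<le> card V"
    and \<pi>: "pairing V \<pi>" and "v \<in> V" "E v (\<pi> v)"
  shows "\<exists>\<pi>'. pairing V \<pi>' \<and> card {x \<in> V. E x (\<pi>' x)} < card {x \<in> V. E x (\<pi> x)}"
proof -
  have "finite V" using assms(1) by (simp add: simple_graph_def)
  have E_sym: "E a b \<Longrightarrow> E b a" for a b using assms(1) by (simp add: simple_graph_def)
  have \<pi>_simps: "\<pi> x \<in> V" "\<pi> x \<noteq> x" "\<pi> (\<pi> x) = x" if "x \<in> V" for x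
    using \<pi> that by (auto simp: pairing_def)
  obtain w where w: "w \<in> V - {v, \<pi> v}" "\<not> E v w" "w \<notin> \<pi> ` {x \<in> V. E (\<pi> v) x}"
    using exists_swap_partner[OF assms(1-3) \<open>v \<in> V\<close> \<pi>_simps(1)[OF \<open>v \<in> V\<close>]] by blast
  have "\<not> E (\<pi> v) (\<pi> w)"
    using w \<pi>_simps by (metis (mono_tags, lifting) DiffD1 image_eqI mem_Collect_eq)
  define \<pi>' where "\<pi>' = \<pi>(v := w, w := v, \<pi> v := \<pi> w, \<pi> w := \<pi> v)"
  have "w \<in> V" "w \<noteq> v" "w \<noteq> \<pi> v" using w by auto
  note distinct = pairing_two_pairs_distinct[OF \<pi> \<open>v \<in> V\<close> this]
  have "pairing V \<pi>'"
    unfolding \<pi>'_def using w \<open>v \<in> V\<close> by (intro pairing_swap[OF \<pi>]) auto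
  have "{x \<in> V. E x (\<pi>' x)} \<subseteq> {x \<in> V. E x (\<pi> x)} - {v}"
  proof
    fix x assume x: "x \<in> {x \<in> V. E x (\<pi>' x)}"
    hence "E x (\<pi>' x)" by simp
    have "E x (\<pi> x) \<and> x \<noteq> v"
    proof (cases "x \<in> {v, w, \<pi> v, \<pi> w}")
      case True
      hence "x = v \<or> x = w \<or> x = \<pi> v \<or> x = \<pi> w" by simp
      thus ?thesis
        using \<open>E x (\<pi>' x)\<close> distinct distinct[symmetric] \<open>w \<noteq> v\<close> \<open>w \<noteq> \<pi> v\<close> w(2)
          \<open>\<not> E (\<pi> v) (\<pi> w)\<close> E_sym
        by (elim disjE) (auto simp: \<pi>'_def)
    next
      case False
      thus ?thesis using \<open>E x (\<pi>' x)\<close> by (auto simp: \<pi>'_def)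
    qed
    thus "x \<in> {x \<in> V. E x (\<pi> x)} - {v}" using x by simp
  qed
  hence "card {x \<in> V. E x (\<pi>' x)} \<le> card ({x \<in> V. E x (\<pi> x)} - {v})"
    using \<open>finite V\<close> by (intro card_mono) auto
  also have "\<dots> < card {x \<in> V. E x (\<pi> x)}"
    using \<open>finite V\<close> assms(5,6) by (intro card_Diff1_less) auto
  finally show ?thesis
    using \<open>pairing V \<pi>'\<close> by blast
qed

lemma edge_free_pairing_exists:
  assumes "simple_graph V E" "\<And>x. x \<in> V \<Longrightarrow> Defs.degree V E x \<le> d" "2 * d + 3 \<le> card V"
    and "even (card V)"
  shows "\<exists>\<pi>. pairing V \<pi> \<and> (\<forall>v\<in>V. \<not> E v (\<pi> v))"
proof -
  have "finite V" using assms(1) by (simp add: simple_graph_def)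
  then obtain \<pi>0 where "pairing V \<pi>0" using pairing_exists assms(4) by blast
  then obtain \<pi> where \<pi>: "pairing V \<pi>"
    and least: "\<And>\<pi>'. pairing V \<pi>' \<Longrightarrow> card {x \<in> V. E x (\<pi> x)} \<le> card {x \<in> V. E x (\<pi>' x)}"
    using ex_has_least_nat[where P="pairing V" and m="\<lambda>\<pi>. card {x \<in> V. E x (\<pi> x)}"] by blast
  have "\<not> E v (\<pi> v)" if "v \<in> V" for v
    using pairing_fewer_edge_pairs[OF assms(1-3) \<pi> that] least not_le by blast
  thus ?thesis using \<pi> by blast
qed

section \<open>Random balanced bipartitions\<close>

locale edge_free_pairing =
  fixes V :: "nat set" and E :: "nat \<Rightarrow> nat \<Rightarrow> bool" and d :: nat and \<pi> :: "nat \<Rightarrow> nat"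
  assumes simple: "simple_graph V E" and regular: "regular V E d"
    and pairing: "pairing V \<pi>" and pairs_non_adjacent: "\<And>v. v \<in> V \<Longrightarrow> \<not> E v (\<pi> v)"
begin

lemma finite_V: "finite V"
  using simple by (simp add: simple_graph_def)

lemma edge_in_V: "E u v \<Longrightarrow> u \<in> V \<and> v \<in> V"
  using simple by (simp add: simple_graph_def)

lemma edge_sym: "E u v \<Longrightarrow> E v u"
  using simple by (simp add: simple_graph_def)

lemma edge_irrefl: "\<not> E v v"
  using simple by (simp add: simple_graph_def)

lemma partner_in_V: "v \<in> V \<Longrightarrow> \<pi> v \<in> V"
  and partner_neq: "v \<in> V \<Longrightarrow> \<pi> v \<noteq> v"
  and partner_partner: "v \<in> V \<Longrightarrow> \<pi> (\<pi> v) = v"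
  using pairing by (auto simp: pairing_def)

definition nbrs :: "nat \<Rightarrow> nat set" where
  "nbrs v = {u \<in> V. E v u}"

lemma finite_nbrs: "finite (nbrs v)"
  using finite_V by (simp add: nbrs_def)

lemma card_nbrs: "v \<in> V \<Longrightarrow> card (nbrs v) = d"
  using regular by (simp add: regular_def Defs.degree_def nbrs_def)

text \<open>The coin \<open>f (rep v, i)\<close> of the pair \<open>{v, \<pi> v}\<close> in round \<open>i\<close> decides which of its two
  vertices lies on the \<open>True\<close> side in that round.\<close>
definition rep :: "nat \<Rightarrow> nat" where
  "rep v = min v (\<pi> v)"

definition reps :: "nat set" where
  "reps = {v \<in> V. v < \<pi> v}"

definition side :: "(nat \<times> nat \<Rightarrow> bool) \<Rightarrow> nat \<Rightarrow> nat \<Rightarrow> bool" where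
  "side f i v \<longleftrightarrow> f (rep v, i) = (v < \<pi> v)"

definition coords :: "nat \<Rightarrow> (nat \<times> nat) set" where
  "coords t = reps \<times> {1..t}"

lemma finite_coords: "finite (coords t)"
  using finite_V by (simp add: coords_def reps_def)

lemma rep_in_reps: "v \<in> V \<Longrightarrow> rep v \<in> reps"
  using partner_in_V[of v] partner_neq[of v] partner_partner[of v]
  by (cases "v < \<pi> v") (auto simp: rep_def reps_def min_def)

lemma rep_partner: "v \<in> V \<Longrightarrow> rep (\<pi> v) = rep v"
  using partner_partner by (simp add: rep_def min.commute)

lemma side_partner: "v \<in> V \<Longrightarrow> side f i (\<pi> v) \<longleftrightarrow> \<not> side f i v"
  using rep_partner[of v] partner_partner[of v] partner_neq[of v]
  by (cases "v < \<pi> v") (auto simp: side_def)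

lemma rep_eq_imp: "u \<in> V \<Longrightarrow> w \<in> V \<Longrightarrow> rep u = rep w \<Longrightarrow> u = w \<or> u = \<pi> w"
  using partner_partner by (auto simp: rep_def min_def split: if_splits) metis+

lemma rep_nbrs: "u \<in> nbrs v \<Longrightarrow> rep u \<noteq> rep v"
  using rep_eq_imp edge_in_V edge_irrefl pairs_non_adjacent edge_sym
  unfolding nbrs_def by blast

lemma card_rep_fibre: "card {w \<in> V. rep w = r} \<le> 2"
proof -
  have "{w \<in> V. rep w = r} \<subseteq> {r, \<pi> r}"
    using partner_partner by (auto simp: rep_def min_def split: if_splits)
  hence "card {w \<in> V. rep w = r} \<le> card {r, \<pi> r}"
    by (intro card_mono) auto
  also have "\<dots> \<le> 2"
    by (simp add: card_insert_if)
  finally show ?thesis .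
qed

definition cut_degree :: "(nat \<times> nat \<Rightarrow> bool) \<Rightarrow> nat \<Rightarrow> nat \<Rightarrow> nat" where
  "cut_degree f i v = card {u \<in> nbrs v. side f i u \<noteq> side f i v}"

definition cut_multiplicity :: "nat \<Rightarrow> (nat \<times> nat \<Rightarrow> bool) \<Rightarrow> nat \<Rightarrow> nat \<Rightarrow> nat" where
  "cut_multiplicity t f u v = card {i \<in> {1..t}. side f i u \<noteq> side f i v}"

lemma balanced_bipartition_sides:
  "balanced_bipartition V {v \<in> V. side f i v} {v \<in> V. \<not> side f i v}"
proof -
  let ?A = "{v \<in> V. side f i v}" and ?B = "{v \<in> V. \<not> side f i v}"
  have "bij_betw \<pi> ?A ?B"
    by (rule bij_betw_byWitness[where f'=\<pi>])
       (use partner_partner partner_in_V side_partner in auto)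
  hence "card ?A = card ?B"
    by (rule bij_betw_same_card)
  moreover have "card (?A \<union> ?B) = card ?A + card ?B"
    using finite_V by (intro card_Un_disjoint) auto
  moreover have "?A \<union> ?B = V"
    by auto
  ultimately show ?thesis
    by (auto simp: balanced_bipartition_def)
qed

lemma degree_cut_edges_sides:
  "v \<in> V \<Longrightarrow>
    Defs.degree V (cut_edges E {v \<in> V. side f i v} {v \<in> V. \<not> side f i v}) v = cut_degree f i v"
  unfolding Defs.degree_def cut_degree_def cut_edges_def nbrs_def
  by (rule arg_cong[where f=card]) auto

lemma cut_edges_sides_iff:
  "E u v \<Longrightarrow> cut_edges E {v \<in> V. side f i v} {v \<in> V. \<not> side f i v} u v \<longleftrightarrow> side f i u \<noteq> side f i v"
  using edge_in_V by (auto simp: cut_edges_def)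

text \<open>Neighbours of \<open>v\<close> whose partner is also a neighbour come in pairs with opposite sides,
  so exactly half of them are cut from \<open>v\<close>; only the other neighbours contribute randomness.\<close>
lemma card_cut_paired_nbrs:
  "2 * card {u \<in> nbrs v. \<pi> u \<in> nbrs v \<and> side f i u \<noteq> side f i v} = card {u \<in> nbrs v. \<pi> u \<in> nbrs v}"
proof -
  let ?N = "{u \<in> nbrs v. \<pi> u \<in> nbrs v}"
  let ?C = "{u \<in> nbrs v. \<pi> u \<in> nbrs v \<and> side f i u \<noteq> side f i v}"
  have in_V: "u \<in> nbrs v \<Longrightarrow> u \<in> V" for u by (simp add: nbrs_def)
  have "bij_betw \<pi> ?C (?N - ?C)"
    by (rule bij_betw_byWitness[where f'=\<pi>])
       (use in_V partner_partner side_partner in auto)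
  hence "card ?C = card (?N - ?C)"
    by (rule bij_betw_same_card)
  also have "\<dots> = card ?N - card ?C"
    using finite_nbrs by (intro card_Diff_subset) auto
  finally show ?thesis
    using card_mono[of ?N ?C] finite_nbrs by fastforce
qed

lemma cut_degree_centred:
  assumes "v \<in> V"
  shows "real (cut_degree f i v) - real d / 2
    = real (card {u \<in> nbrs v. \<pi> u \<notin> nbrs v \<and> f (rep u, i) = ((u < \<pi> u) \<noteq> side f i v)})
      - real (card {u \<in> nbrs v. \<pi> u \<notin> nbrs v}) / 2"
proof -
  define N1 where "N1 = {u \<in> nbrs v. \<pi> u \<notin> nbrs v}"
  define N2 where "N2 = {u \<in> nbrs v. \<pi> u \<in> nbrs v}"
  have "finite N1" "finite N2" using finite_nbrs by (auto simp: N1_def N2_def)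
  have "N1 \<union> N2 = nbrs v" "N1 \<inter> N2 = {}"
    by (auto simp: N1_def N2_def)
  hence "card N1 + card N2 = d"
    using card_nbrs[OF \<open>v \<in> V\<close>] card_Un_disjoint[OF \<open>finite N1\<close> \<open>finite N2\<close>] by simp
  have "cut_degree f i v = card {u \<in> N1. side f i u \<noteq> side f i v}
      + card {u \<in> N2. side f i u \<noteq> side f i v}"
    unfolding cut_degree_def using finite_nbrs
    by (subst card_Un_disjoint[symmetric]) (auto simp: N1_def N2_def intro: arg_cong[where f=card])
  moreover have "{u \<in> N1. side f i u \<noteq> side f i v}
      = {u \<in> nbrs v. \<pi> u \<notin> nbrs v \<and> f (rep u, i) = ((u < \<pi> u) \<noteq> side f i v)}"
    by (auto simp: side_def N1_def)
  moreover have "2 * card {u \<in> N2. side f i u \<noteq> side f i v} = card N2"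
    using card_cut_paired_nbrs[of v f i] unfolding N2_def by (simp add: conj_assoc)
  ultimately show ?thesis
    using \<open>card N1 + card N2 = d\<close> by (simp add: field_simps N1_def)
qed

lemma card_cut_degree_deviation:
  assumes "v \<in> V" "i \<in> {1..t}" "r > 0"
  shows "real (card {f \<in> bool_assignments (coords t). r \<le> \<bar>real (cut_degree f i v) - real d / 2\<bar>})
    \<le> 2 * real (card (bool_assignments (coords t))) * exp (- 2 * r^2 / real d)"
proof -
  define N1 where "N1 = {u \<in> nbrs v. \<pi> u \<notin> nbrs v}"
  define \<phi> where "\<phi> u = (rep u, i)" for u
  define c where "c f u \<longleftrightarrow> (u < \<pi> u) \<noteq> side f i v" for f :: "nat \<times> nat \<Rightarrow> bool" and u
  have "finite N1" using finite_nbrs by (simp add: N1_def)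
  have "card N1 \<le> d"
    using card_nbrs[OF \<open>v \<in> V\<close>] finite_nbrs by (metis (no_types, lifting) N1_def card_mono mem_Collect_eq subsetI)
  have deviation: "real (cut_degree f i v) - real d / 2
      = real (card {u \<in> N1. f (\<phi> u) = c f u}) - real (card N1) / 2" for f
    using cut_degree_centred[OF \<open>v \<in> V\<close>, of f i] by (simp add: N1_def \<phi>_def c_def conj_assoc)
  show ?thesis
  proof (cases "N1 = {}")
    case True
    hence centred: "real (cut_degree f i v) - real d / 2 = 0" for f
      using deviation[of f] by simp
    have no_deviation: "{f \<in> bool_assignments (coords t). r \<le> \<bar>real (cut_degree f i v) - real d / 2\<bar>} = {}"
      using \<open>r > 0\<close> by (simp only: centred) simp
    show ?thesis unfolding no_deviation by simp
  next
    case False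
    have "inj_on \<phi> N1"
      using rep_eq_imp by (auto simp: inj_on_def \<phi>_def N1_def nbrs_def)
    moreover have "\<phi> ` N1 \<subseteq> coords t"
      using rep_in_reps \<open>i \<in> {1..t}\<close> by (auto simp: \<phi>_def coords_def N1_def nbrs_def)
    moreover have "c (f(k := b)) = c f" if "k \<in> \<phi> ` N1" for f k b
    proof -
      have "k \<noteq> (rep v, i)"
        using that rep_nbrs by (auto simp: \<phi>_def N1_def)
      thus ?thesis by (simp add: c_def side_def fun_eq_iff)
    qed
    ultimately have "real (card {f \<in> bool_assignments (coords t).
        r \<le> \<bar>real (card {u \<in> N1. f (\<phi> u) = c f u}) - real (card N1) / 2\<bar>})
      \<le> 2 * real (card (bool_assignments (coords t))) * exp (- 2 * r^2 / real (card N1))"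
      using finite_coords \<open>finite N1\<close> \<open>r > 0\<close> False by (intro card_agreements_deviation) auto
    moreover have "exp (- 2 * r^2 / real (card N1)) \<le> exp (- 2 * r^2 / real d)"
      using False \<open>finite N1\<close> \<open>card N1 \<le> d\<close> by (simp add: frac_le card_gt_0_iff)
    ultimately show ?thesis
      unfolding deviation by (smt (verit) mult_left_mono of_nat_0_le_iff)
  qed
qed

lemma card_cut_multiplicity_deviation:
  assumes "E u v" "t \<ge> 1" "r > 0"
  shows "real (card {f \<in> bool_assignments (coords t).
      r \<le> \<bar>real (cut_multiplicity t f u v) - real t / 2\<bar>})
    \<le> 2 * real (card (bool_assignments (coords t))) * exp (- 2 * r^2 / real t)"
proof -
  have "rep u \<noteq> rep v"
    using rep_nbrs[of u v] assms(1) edge_in_V edge_sym by (auto simp: nbrs_def)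
  define \<phi> where "\<phi> i = (rep u, i)" for i :: nat
  define c where "c f i \<longleftrightarrow> (u < \<pi> u) \<noteq> side f i v" for f :: "nat \<times> nat \<Rightarrow> bool" and i
  have "cut_multiplicity t f u v = card {i \<in> {1..t}. f (\<phi> i) = c f i}" for f
    unfolding cut_multiplicity_def by (rule arg_cong[where f=card]) (auto simp: side_def \<phi>_def c_def)
  moreover have "inj_on \<phi> {1..t}"
    by (simp add: inj_on_def \<phi>_def)
  moreover have "\<phi> ` {1..t} \<subseteq> coords t"
    using rep_in_reps edge_in_V[OF \<open>E u v\<close>] by (auto simp: \<phi>_def coords_def)
  moreover have "c (f(k := b)) = c f" if "k \<in> \<phi> ` {1..t}" for f k b
    using that \<open>rep u \<noteq> rep v\<close> by (auto simp: c_def side_def \<phi>_def fun_eq_iff)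
  ultimately show ?thesis
    using finite_coords \<open>t \<ge> 1\<close> \<open>r > 0\<close> card_agreements_deviation[of "coords t" "{1..t}" \<phi> c r]
    by simp
qed

text \<open>Bad events are indexed by \<open>Inl (v, i)\<close> (vertex \<open>v\<close> in round \<open>i\<close>) and \<open>Inr (u, v)\<close>
  (edge \<open>uv\<close>); the support of an event is the set of coins it depends on.\<close>
definition events :: "nat \<Rightarrow> ((nat \<times> nat) + (nat \<times> nat)) set" where
  "events t = Inl ` (V \<times> {1..t}) \<union> Inr ` {(u, v). E u v}"

definition support :: "nat \<Rightarrow> (nat \<times> nat) + (nat \<times> nat) \<Rightarrow> (nat \<times> nat) set" where
  "support t x = (case x of
      Inl (v, i) \<Rightarrow> (\<lambda>w. (rep w, i)) ` insert v (nbrs v)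
    | Inr (u, v) \<Rightarrow> {rep u, rep v} \<times> {1..t})"

definition bad_event :: "nat \<Rightarrow> real \<Rightarrow> real \<Rightarrow> (nat \<times> nat) + (nat \<times> nat) \<Rightarrow> (nat \<times> nat \<Rightarrow> bool) set"
  where "bad_event t rd rt x = (case x of
      Inl (v, i) \<Rightarrow> {f. rd < \<bar>real (cut_degree f i v) - real d / 2\<bar>}
    | Inr (u, v) \<Rightarrow> {f. rt < \<bar>real (cut_multiplicity t f u v) - real t / 2\<bar>})"

lemma finite_events: "finite (events t)"
proof -
  have "{(u, v). E u v} \<subseteq> V \<times> V" using edge_in_V by auto
  hence "finite {(u, v). E u v}"
    using finite_V by (meson finite_SigmaI finite_subset)
  thus ?thesis using finite_V by (simp add: events_def)
qed

lemma finite_support: "finite (support t x)"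
  using finite_nbrs by (auto simp: support_def split: sum.split prod.split)

lemma depends_only_bad_event: "depends_only (coords t) (support t x) (bad_event t rd rt x)"
proof (cases x)
  case (Inl a)
  then obtain v i where x: "x = Inl (v, i)" by (cases a) auto
  have same: "cut_degree f i v = cut_degree g i v" if "\<forall>k\<in>support t x. f k = g k" for f g
    unfolding cut_degree_def using that
    by (intro arg_cong[where f=card] Collect_cong) (auto simp: x support_def side_def)
  show ?thesis
    unfolding depends_only_def
  proof (intro ballI impI)
    fix f g :: "nat \<times> nat \<Rightarrow> bool" assume "\<forall>k\<in>support t x. f k = g k"
    thus "f \<in> bad_event t rd rt x \<longleftrightarrow> g \<in> bad_event t rd rt x"
      using same[of f g] by (simp add: bad_event_def x)
  qed
next
  case (Inr a)
  then obtain u v where x: "x = Inr (u, v)" by (cases a) auto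
  have same: "cut_multiplicity t f u v = cut_multiplicity t g u v" if "\<forall>k\<in>support t x. f k = g k" for f g
    unfolding cut_multiplicity_def using that
    by (intro arg_cong[where f=card] Collect_cong) (auto simp: x support_def side_def)
  show ?thesis
    unfolding depends_only_def
  proof (intro ballI impI)
    fix f g :: "nat \<times> nat \<Rightarrow> bool" assume "\<forall>k\<in>support t x. f k = g k"
    thus "f \<in> bad_event t rd rt x \<longleftrightarrow> g \<in> bad_event t rd rt x"
      using same[of f g] by (simp add: bad_event_def x)
  qed
qed

lemma events_at_subset:
  fixes r i t :: nat
  defines "F \<equiv> {w \<in> V. rep w = r}"
  shows "{z \<in> events t. (r, i) \<in> support t z}
    \<subseteq> Inl ` ((F \<union> (\<Union>w\<in>F. nbrs w)) \<times> {i}) \<union> Inr ` ((\<Union>w\<in>F. {w} \<times> nbrs w) \<union> (\<Union>w\<in>F. nbrs w \<times> {w}))"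
proof
  fix z assume z: "z \<in> {z \<in> events t. (r, i) \<in> support t z}"
  show "z \<in> Inl ` ((F \<union> (\<Union>w\<in>F. nbrs w)) \<times> {i}) \<union> Inr ` ((\<Union>w\<in>F. {w} \<times> nbrs w) \<union> (\<Union>w\<in>F. nbrs w \<times> {w}))"
  proof (cases z)
    case (Inl a)
    then obtain v j where zz: "z = Inl (v, j)" by (cases a) auto
    with z have "v \<in> V" by (auto simp: events_def)
    from z obtain w where w: "w \<in> insert v (nbrs v)" "rep w = r" "j = i"
      by (auto simp: zz support_def)
    have "v \<in> F \<or> (w \<in> F \<and> v \<in> nbrs w)"
      using w \<open>v \<in> V\<close> edge_sym by (auto simp: F_def nbrs_def)
    thus ?thesis using zz w by auto
  next
    case (Inr a)
    then obtain u v where zz: "z = Inr (u, v)" by (cases a) auto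
    with z have "E u v" by (auto simp: events_def)
    moreover have "rep u = r \<or> rep v = r"
      using z by (auto simp: zz support_def)
    ultimately show ?thesis
      using edge_in_V[OF \<open>E u v\<close>] edge_sym zz by (auto simp: F_def nbrs_def)
  qed
qed

lemma card_events_at: "card {z \<in> events t. (r, i) \<in> support t z} \<le> 6 * d + 2"
proof -
  define F where "F = {w \<in> V. rep w = r}"
  define P where "P = (F \<union> (\<Union>w\<in>F. nbrs w)) \<times> {i}"
  define Q where "Q = (\<Union>w\<in>F. {w} \<times> nbrs w) \<union> (\<Union>w\<in>F. nbrs w \<times> {w})"
  have "finite F" using finite_V by (simp add: F_def)
  have sum_nbrs: "(\<Sum>w\<in>F. card (nbrs w)) \<le> 2 * d"
    using card_rep_fibre[of r] card_nbrs by (simp add: F_def)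
  have "card (F \<union> (\<Union>w\<in>F. nbrs w)) \<le> card F + (\<Sum>w\<in>F. card (nbrs w))"
    using card_Un_le[of F "\<Union>w\<in>F. nbrs w"] card_UN_le[OF \<open>finite F\<close>, of nbrs] by linarith
  hence card_P: "card P \<le> 2 + 2 * d"
    using card_rep_fibre[of r] sum_nbrs by (simp add: P_def card_cartesian_product F_def)
  have card_Q: "card Q \<le> 4 * d"
  proof -
    have "card Q \<le> card (\<Union>w\<in>F. {w} \<times> nbrs w) + card (\<Union>w\<in>F. nbrs w \<times> {w})"
      unfolding Q_def by (rule card_Un_le)
    also have "\<dots> \<le> (\<Sum>w\<in>F. card ({w} \<times> nbrs w)) + (\<Sum>w\<in>F. card (nbrs w \<times> {w}))"
      by (intro add_mono card_UN_le \<open>finite F\<close>)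
    finally show ?thesis using sum_nbrs by (simp add: card_cartesian_product)
  qed
  have "finite P" "finite Q"
    using \<open>finite F\<close> finite_nbrs by (auto simp: P_def Q_def)
  hence "card {z \<in> events t. (r, i) \<in> support t z} \<le> card (Inl ` P \<union> Inr ` Q)"
    using events_at_subset[of t r i] by (intro card_mono) (auto simp: F_def P_def Q_def)
  also have "\<dots> \<le> card (Inl ` P :: ((nat \<times> nat) + (nat \<times> nat)) set) + card (Inr ` Q :: ((nat \<times> nat) + (nat \<times> nat)) set)"
    by (rule card_Un_le)
  also have "\<dots> = card P + card Q"
    by (simp add: card_image)
  finally show ?thesis using card_P card_Q by linarith
qed

lemma card_support:
  assumes "x \<in> events t" "1 \<le> d" "t \<le> d"
  shows "card (support t x) \<le> 2 * d"
proof (cases x)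
  case (Inl a)
  then obtain v i where x: "x = Inl (v, i)" by (cases a) auto
  with assms(1) have "v \<in> V" by (auto simp: events_def)
  have "card (support t x) \<le> card (insert v (nbrs v))"
    unfolding x support_def by (simp only: sum.case prod.case) (rule card_image_le, simp add: finite_nbrs)
  also have "\<dots> \<le> d + 1"
    using card_nbrs[OF \<open>v \<in> V\<close>] finite_nbrs by (simp add: card_insert_if)
  finally show ?thesis using assms(2) by linarith
next
  case (Inr a)
  then obtain u v where x: "x = Inr (u, v)" by (cases a) auto
  have "card (support t x) = card {rep u, rep v} * t"
    by (simp add: x support_def card_cartesian_product)
  also have "\<dots> \<le> 2 * t"
    by (intro mult_right_mono) (auto simp: card_insert_if)
  finally show ?thesis using assms(3) by linarith
qed

lemma card_dependent_events:
  assumes "x \<in> events t" "1 \<le> d" "t \<le> d"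
  shows "card {z \<in> events t. support t x \<inter> support t z \<noteq> {}} \<le> 2 * d * (6 * d + 2)"
proof -
  have "{z \<in> events t. support t x \<inter> support t z \<noteq> {}} \<subseteq> (\<Union>k\<in>support t x. {z \<in> events t. k \<in> support t z})"
    by auto
  hence "card {z \<in> events t. support t x \<inter> support t z \<noteq> {}}
      \<le> card (\<Union>k\<in>support t x. {z \<in> events t. k \<in> support t z})"
    using finite_support finite_events by (intro card_mono) auto
  also have "\<dots> \<le> (\<Sum>k\<in>support t x. card {z \<in> events t. k \<in> support t z})"
    by (rule card_UN_le[OF finite_support])
  also have "\<dots> \<le> (\<Sum>k\<in>support t x. 6 * d + 2)"
  proof (rule sum_mono)
    fix k :: "nat \<times> nat"
    show "card {z \<in> events t. k \<in> support t z} \<le> 6 * d + 2"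
      using card_events_at[of t "fst k" "snd k"] by simp
  qed
  also have "\<dots> = card (support t x) * (6 * d + 2)"
    by simp
  also have "\<dots> \<le> 2 * d * (6 * d + 2)"
    using card_support[OF assms] by (intro mult_right_mono) auto
  finally show ?thesis .
qed

lemma card_bad_event:
  assumes "x \<in> events t" "1 \<le> t" "rd > 0" "rt > 0" "y \<le> rd^2 / real d" "y \<le> rt^2 / real t"
  shows "real (card (bad_event t rd rt x \<inter> bool_assignments (coords t)))
    \<le> 2 * exp (- 2 * y) * real (card (bool_assignments (coords t)))"
proof (cases x)
  case (Inl a)
  then obtain v i where x: "x = Inl (v, i)" by (cases a) auto
  with assms(1) have "v \<in> V" "i \<in> {1..t}" by (auto simp: events_def)
  have "card (bad_event t rd rt x \<inter> bool_assignments (coords t))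
      \<le> card {f \<in> bool_assignments (coords t). rd \<le> \<bar>real (cut_degree f i v) - real d / 2\<bar>}"
    using finite_bool_assignments[OF finite_coords] by (intro card_mono) (auto simp: bad_event_def x)
  hence "real (card (bad_event t rd rt x \<inter> bool_assignments (coords t)))
      \<le> real (card {f \<in> bool_assignments (coords t). rd \<le> \<bar>real (cut_degree f i v) - real d / 2\<bar>})"
    by simp
  also have "\<dots> \<le> 2 * real (card (bool_assignments (coords t))) * exp (- 2 * rd^2 / real d)"
    by (rule card_cut_degree_deviation[OF \<open>v \<in> V\<close> \<open>i \<in> {1..t}\<close> \<open>rd > 0\<close>])
  also have "\<dots> \<le> 2 * real (card (bool_assignments (coords t))) * exp (- 2 * y)"
    using assms(5) by (intro mult_left_mono) auto
  finally show ?thesis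
    by (simp add: ac_simps)
next
  case (Inr a)
  then obtain u v where x: "x = Inr (u, v)" by (cases a) auto
  with assms(1) have "E u v" by (auto simp: events_def)
  have "card (bad_event t rd rt x \<inter> bool_assignments (coords t))
      \<le> card {f \<in> bool_assignments (coords t). rt \<le> \<bar>real (cut_multiplicity t f u v) - real t / 2\<bar>}"
    using finite_bool_assignments[OF finite_coords] by (intro card_mono) (auto simp: bad_event_def x)
  hence "real (card (bad_event t rd rt x \<inter> bool_assignments (coords t)))
      \<le> real (card {f \<in> bool_assignments (coords t). rt \<le> \<bar>real (cut_multiplicity t f u v) - real t / 2\<bar>})"
    by simp
  also have "\<dots> \<le> 2 * real (card (bool_assignments (coords t))) * exp (- 2 * rt^2 / real t)"
    by (rule card_cut_multiplicity_deviation[OF \<open>E u v\<close> \<open>1 \<le> t\<close> \<open>rt > 0\<close>])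
  also have "\<dots> \<le> 2 * real (card (bool_assignments (coords t))) * exp (- 2 * y)"
    using assms(6) by (intro mult_left_mono) auto
  finally show ?thesis
    by (simp add: ac_simps)
qed

lemma exists_concentrated_assignment:
  assumes "1 \<le> t" "t \<le> d" "rd > 0" "rt > 0" "y \<le> rd^2 / real d" "y \<le> rt^2 / real t"
    and "2 * exp (- 2 * y) * (2 * real d * (6 * real d + 2) + 2)^2 \<le> 1"
  shows "\<exists>f. (\<forall>v\<in>V. \<forall>i\<in>{1..t}. \<bar>real (cut_degree f i v) - real d / 2\<bar> \<le> rd)
    \<and> (\<forall>u v. E u v \<longrightarrow> \<bar>real (cut_multiplicity t f u v) - real t / 2\<bar> \<le> rt)"
proof -
  interpret local_lemma "coords t" "events t" "bad_event t rd rt" "support t"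
    "2 * d * (6 * d + 2)" "2 * exp (- 2 * y)"
  proof
    show "finite (coords t)" by (rule finite_coords)
    show "finite (events t)" by (rule finite_events)
    show "depends_only (coords t) (support t x) (bad_event t rd rt x)" for x
      by (rule depends_only_bad_event)
    show "card {z \<in> events t. support t x \<inter> support t z \<noteq> {}} \<le> 2 * d * (6 * d + 2)"
      if "x \<in> events t" for x
      using card_dependent_events[OF that] assms(1,2) by simp
    show "real (card (bad_event t rd rt x \<inter> bool_assignments (coords t)))
        \<le> 2 * exp (- 2 * y) * real (card (bool_assignments (coords t)))"
      if "x \<in> events t" for x
      using card_bad_event[OF that assms(1,3-6)] .
    have "real (2 * d * (6 * d + 2)) = 2 * real d * (6 * real d + 2)"
      by (simp add: algebra_simps)
    thus "2 * exp (- 2 * y) * (real (2 * d * (6 * d + 2)) + 2)^2 \<le> 1"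
      using assms(7) by (simp only:)
  qed
  obtain f where f: "\<forall>x\<in>events t. f \<notin> bad_event t rd rt x"
    using exists_avoiding_all by blast
  have "\<bar>real (cut_degree f i v) - real d / 2\<bar> \<le> rd" if "v \<in> V" "i \<in> {1..t}" for v i
  proof -
    have "Inl (v, i) \<in> events t" using that by (simp add: events_def)
    thus ?thesis using f by (force simp: bad_event_def)
  qed
  moreover have "\<bar>real (cut_multiplicity t f u v) - real t / 2\<bar> \<le> rt" if "E u v" for u v
  proof -
    have "Inr (u, v) \<in> events t" using that by (simp add: events_def)
    thus ?thesis using f by (force simp: bad_event_def)
  qed
  ultimately show ?thesis by blast
qed

end

lemma min_max_degree_bounds:
  assumes "finite V" "V \<noteq> {}" and close: "\<And>v. v \<in> V \<Longrightarrow> \<bar>real (Defs.degree V E v) - c\<bar> \<le> r"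
  shows "c - r \<le> real (min_degree V E) \<and> min_degree V E \<le> max_degree V E
    \<and> real (max_degree V E) \<le> c + r"
proof -
  have degrees: "finite (Defs.degree V E ` V)" "Defs.degree V E ` V \<noteq> {}"
    using assms(1,2) by auto
  obtain v w where "v \<in> V" "min_degree V E = Defs.degree V E v"
    and "w \<in> V" "max_degree V E = Defs.degree V E w"
    using Min_in[OF degrees] Max_in[OF degrees] by (auto simp: min_degree_def max_degree_def)
  moreover have "min_degree V E \<le> max_degree V E"
    unfolding min_degree_def max_degree_def using Min_le[OF degrees(1) Max_in[OF degrees]] .
  ultimately show ?thesis
    using close[of v] close[of w] by auto
qed

lemma regular_graph_balanced_bipartitions:
  fixes V :: "nat set" and d t :: nat and rd rt y :: real
  assumes "simple_graph V E" "regular V E d" "even (card V)" "2 * d + 3 \<le> card V"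
    and "1 \<le> t" "t \<le> d" "rd > 0" "rt > 0" "y \<le> rd^2 / real d" "y \<le> rt^2 / real t"
    and "2 * exp (- 2 * y) * (2 * real d * (6 * real d + 2) + 2)^2 \<le> 1"
  shows "\<exists>A B :: nat \<Rightarrow> nat set.
    (\<forall>i \<in> {1..t}. balanced_bipartition V (A i) (B i)) \<and>
    (\<forall>i \<in> {1..t}.
       real d / 2 - rd \<le> real (min_degree V (cut_edges E (A i) (B i))) \<and>
       min_degree V (cut_edges E (A i) (B i)) \<le> max_degree V (cut_edges E (A i) (B i)) \<and>
       real (max_degree V (cut_edges E (A i) (B i))) \<le> real d / 2 + rd) \<and>
    (\<forall>u v. E u v \<longrightarrow>
       real t / 2 - rt \<le> real (card {i \<in> {1..t}. cut_edges E (A i) (B i) u v}) \<and>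
       real (card {i \<in> {1..t}. cut_edges E (A i) (B i) u v}) \<le> real t / 2 + rt)"
proof -
  obtain \<pi> where "pairing V \<pi>" "\<forall>v\<in>V. \<not> E v (\<pi> v)"
    using edge_free_pairing_exists[OF assms(1) _ assms(4,3)] assms(2) by (auto simp: regular_def)
  then interpret edge_free_pairing V E d \<pi>
    using assms(1,2) by unfold_locales auto
  obtain f where f_vertices: "\<forall>v\<in>V. \<forall>i\<in>{1..t}. \<bar>real (cut_degree f i v) - real d / 2\<bar> \<le> rd"
    and f_edges: "\<forall>u v. E u v \<longrightarrow> \<bar>real (cut_multiplicity t f u v) - real t / 2\<bar> \<le> rt"
    using exists_concentrated_assignment[OF assms(5-11)] by blast
  define A where "A i = {v \<in> V. side f i v}" for i
  define B where "B i = {v \<in> V. \<not> side f i v}" for i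
  have "V \<noteq> {}" using assms(4) by auto
  have "\<bar>real (Defs.degree V (cut_edges E (A i) (B i)) v) - real d / 2\<bar> \<le> rd"
    if "i \<in> {1..t}" "v \<in> V" for i v
    using f_vertices that degree_cut_edges_sides[OF \<open>v \<in> V\<close>] by (simp add: A_def B_def)
  hence "\<forall>i \<in> {1..t}. real d / 2 - rd \<le> real (min_degree V (cut_edges E (A i) (B i))) \<and>
       min_degree V (cut_edges E (A i) (B i)) \<le> max_degree V (cut_edges E (A i) (B i)) \<and>
       real (max_degree V (cut_edges E (A i) (B i))) \<le> real d / 2 + rd"
    using finite_V \<open>V \<noteq> {}\<close> by (intro ballI min_max_degree_bounds) auto
  moreover have "real t / 2 - rt \<le> real (card {i \<in> {1..t}. cut_edges E (A i) (B i) u v}) \<and>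
       real (card {i \<in> {1..t}. cut_edges E (A i) (B i) u v}) \<le> real t / 2 + rt" if "E u v" for u v
  proof -
    have "card {i \<in> {1..t}. cut_edges E (A i) (B i) u v} = cut_multiplicity t f u v"
      using cut_edges_sides_iff[OF that] by (simp add: A_def B_def cut_multiplicity_def)
    thus ?thesis using f_edges that abs_le_iff by fastforce
  qed
  moreover have "\<forall>i \<in> {1..t}. balanced_bipartition V (A i) (B i)"
    using balanced_bipartition_sides by (simp add: A_def B_def)
  ultimately show ?thesis by blast
qed

lemma eventually_local_lemma_condition:
  "(b :: real) > 0 \<Longrightarrow> eventually (\<lambda>x :: real. 2 * exp (- 2 * x powr b) * (2 * x * (6 * x + 2) + 2)^2 \<le> 1) at_top"
  by real_asymp

lemma square_powr_two_thirds_div: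
  fixes x :: real
  assumes "x > 0"
  shows "(x powr (2/3))^2 / x = x powr (1/3)"
proof -
  have "(x powr (2/3))^2 / x = x powr (4/3) / x powr 1"
    using assms by (simp add: power2_eq_square powr_add[symmetric])
  also have "\<dots> = x powr (1/3)"
    by (subst powr_diff[symmetric]) simp
  finally show ?thesis .
qed

lemma thresholds_from_powr_range:
  fixes a :: real and d t :: nat
  assumes "0 < a" "a \<le> 100" "1 \<le> d" "real d powr (a / 100) \<le> real t" "real t \<le> real d powr (1 / 10)"
  shows "1 \<le> t" "t \<le> d" "real d powr (a / 300) \<le> (real d powr (2 / 3))^2 / real d"
    "real d powr (a / 300) \<le> (real t powr (2 / 3))^2 / real t"
proof -
  have "1 \<le> real d powr (a / 100)"
    using assms by (intro ge_one_powr_ge_zero) auto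
  thus "1 \<le> t" using assms(4) by linarith
  have "real d powr (1 / 10) \<le> real d powr 1"
    using assms(3) by (intro powr_mono) auto
  thus "t \<le> d" using assms(3,5) by simp
  have "real d powr (a / 300) \<le> real d powr (1 / 3)"
    using assms by (intro powr_mono) auto
  thus "real d powr (a / 300) \<le> (real d powr (2 / 3))^2 / real d"
    using assms(3) by (simp add: square_powr_two_thirds_div)
  have "real d powr (a / 300) = (real d powr (a / 100)) powr (1 / 3)"
    by (simp add: powr_powr)
  also have "\<dots> \<le> real t powr (1 / 3)"
    using assms(4) by (intro powr_mono2) auto
  finally show "real d powr (a / 300) \<le> (real t powr (2 / 3))^2 / real t"
    using \<open>1 \<le> t\<close> by (simp add: square_powr_two_thirds_div)
qed

theorem lemma3p1:
  fixes a :: real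
  assumes "0 < a" and "a < 1"
  shows "\<exists>d0::nat. \<forall>d::nat. d \<ge> d0 \<longrightarrow> (\<exists>N::nat. \<forall>n::nat. n \<ge> N \<longrightarrow> even n \<longrightarrow>
    (\<forall>V E. simple_graph V E \<and> card V = n \<and> regular V E d \<longrightarrow>
      (\<forall>t::nat. real d powr (a / 100) \<le> real t \<and> real t \<le> real d powr (1 / 10) \<longrightarrow>
        (\<exists>A B :: nat \<Rightarrow> nat set.
          (\<forall>i \<in> {1..t}. balanced_bipartition V (A i) (B i)) \<and>
          (\<forall>i \<in> {1..t}.
             real d / 2 - real d powr (2 / 3) \<le> real (min_degree V (cut_edges E (A i) (B i))) \<and>
             min_degree V (cut_edges E (A i) (B i)) \<le> max_degree V (cut_edges E (A i) (B i)) \<and>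
             real (max_degree V (cut_edges E (A i) (B i))) \<le> real d / 2 + real d powr (2 / 3)) \<and>
          (\<forall>u v. E u v \<longrightarrow>
             real t / 2 - real t powr (2 / 3) \<le> real (card {i \<in> {1..t}. cut_edges E (A i) (B i) u v}) \<and>
             real (card {i \<in> {1..t}. cut_edges E (A i) (B i) u v}) \<le> real t / 2 + real t powr (2 / 3))))))"
proof -
  obtain X0 where X0: "\<And>x. x \<ge> X0 \<Longrightarrow>
      2 * exp (- 2 * x powr (a / 300)) * (2 * x * (6 * x + 2) + 2)^2 \<le> 1"
    using eventually_local_lemma_condition[of "a / 300"] \<open>0 < a\<close>
    by (auto simp: eventually_at_top_linorder)
  show ?thesis
    apply (rule exI[of _ "max 1 (nat \<lceil>X0\<rceil>)"], intro allI impI)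
    subgoal for d
      apply (rule exI[of _ "2 * d + 3"], intro allI impI, elim conjE)
      subgoal for n V E t
        using thresholds_from_powr_range[of a d t] X0[of "real d"] assms
        by (intro regular_graph_balanced_bipartitions[where y="real d powr (a / 300)"]) auto
      done
    done
qed

end
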